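(* Let $L$ be a Lie algebra over a field $F$ and $\tilde L=L\otimes_FE$. Let $\Omega$ be a finite family of pairwise commuting elements of $\tilde L$ such that every element of $\Omega$ lies in one of the subspaces $L\otimes e_\pi+\tilde Le_\pi$. Write $\operatorname{ad}^{[k]}(\Omega)=U_k(\operatorname{ad}(\Omega))$ and suppose $\operatorname{ad}^{[3]}(\Omega)=\operatorname{ad}^{[4]}(\Omega)=0$. Then for arbitrary $y_1,y_2\in\tilde L$, \[\operatorname{ad}(y_1\operatorname{ad}^{[2]}(\Omega))\operatorname{ad}(y_2\operatorname{ad}^{[2]}(\Omega))=\operatorname{ad}^{[2]}(\Omega)\operatorname{ad}(y_1)\operatorname{ad}(y_2)\operatorname{ad}^{[2]}(\Omega).\]
   Context: $E$ is the commutative associative $F$-algebra without unit generated by $e_1,e_2,\dots$ with relations $e_i^2=0$; its basis consists of $e_\pi=e_{i_1}\cdots e_{i_r}$ for nonempty finite $\pi=\{i_1<\dots<i_r\}$. $\tilde L=L\otimes_FE$ with $[x\otimes\alpha,y\otimes\beta]=[x,y]\otimes\alpha\beta$, and $\tilde Le_\pi$ denotes $L\otimes Ee_\pi$. $\operatorname{ad}(b):x\mapsto[x,b]$, operators act on the right ($x\,uv$ means apply $u$ then $v$). For a finite family $\Omega'$ of pairwise commuting operators, $U_k(\Omega')=\sum d_1\cdots d_k$ over all $k$-element subsets $\{d_1,\dots,d_k\}$ of $\Omega'$, and $\operatorname{ad}(\Omega)=\{\operatorname{ad}(b)\}_{b\in\Omega}$. *)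

theory Defs
  imports Complex_Main
begin

definition lie_algebra :: "('f::field \<Rightarrow> 'l::ab_group_add \<Rightarrow> 'l) \<Rightarrow> ('l \<Rightarrow> 'l \<Rightarrow> 'l) \<Rightarrow> bool" where
  "lie_algebra scale br \<longleftrightarrow> vector_space scale \<and>
     (\<forall>x y z. br (x + y) z = br x z + br y z) \<and>
     (\<forall>x y z. br x (y + z) = br x y + br x z) \<and>
     (\<forall>c x y. br (scale c x) y = scale c (br x y)) \<and>
     (\<forall>c x y. br x (scale c y) = scale c (br x y)) \<and>
     (\<forall>x. br x x = 0) \<and>
     (\<forall>x y z. br x (br y z) + br y (br z x) + br z (br x y) = 0)"

text \<open>Elements of L \<otimes> E, identified with their coordinate functions w.r.t. the basis
e_\<pi> (\<pi> nonempty finite subset of nat): \<open>y \<pi>\<close> is the L-coefficient of e_\<pi>.\<close>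
definition tilde :: "(nat set \<Rightarrow> 'l::zero) \<Rightarrow> bool" where
  "tilde y \<longleftrightarrow> finite {\<sigma>. y \<sigma> \<noteq> 0} \<and> (\<forall>\<sigma>. y \<sigma> \<noteq> 0 \<longrightarrow> finite \<sigma> \<and> \<sigma> \<noteq> {})"

text \<open>Bracket on L \<otimes> E: [x \<otimes> e_\<alpha>, y \<otimes> e_\<beta>] = [x,y] \<otimes> e_\<alpha> e_\<beta>, where
e_\<alpha> e_\<beta> = e_{\<alpha> \<union> \<beta>} if \<alpha>, \<beta> are disjoint and 0 otherwise.\<close>
definition tbr :: "('l \<Rightarrow> 'l \<Rightarrow> 'l::comm_monoid_add) \<Rightarrow> (nat set \<Rightarrow> 'l) \<Rightarrow> (nat set \<Rightarrow> 'l) \<Rightarrow> (nat set \<Rightarrow> 'l)" where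
  "tbr br y z = (\<lambda>\<sigma>. if finite \<sigma> then (\<Sum>\<alpha>\<in>Pow \<sigma>. if \<alpha> \<noteq> {} \<and> \<alpha> \<noteq> \<sigma> then br (y \<alpha>) (z (\<sigma> - \<alpha>)) else 0) else 0)"

definition mul_e :: "(nat set \<Rightarrow> 'l::zero) \<Rightarrow> nat set \<Rightarrow> (nat set \<Rightarrow> 'l)" where
  "mul_e y \<pi> = (\<lambda>\<sigma>. if \<pi> \<subseteq> \<sigma> \<and> \<sigma> \<noteq> \<pi> then y (\<sigma> - \<pi>) else 0)"

definition in_sub :: "nat set \<Rightarrow> (nat set \<Rightarrow> 'l::comm_monoid_add) \<Rightarrow> bool" where
  "in_sub \<pi> w \<longleftrightarrow> (\<exists>x y. tilde y \<and> w = (\<lambda>\<sigma>. (if \<sigma> = \<pi> then x else 0) + mul_e y \<pi> \<sigma>))"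

definition ad :: "('l \<Rightarrow> 'l \<Rightarrow> 'l::comm_monoid_add) \<Rightarrow> (nat set \<Rightarrow> 'l) \<Rightarrow> (nat set \<Rightarrow> 'l) \<Rightarrow> (nat set \<Rightarrow> 'l)" where
  "ad br b = (\<lambda>x. tbr br x b)"

text \<open>Product of operators acting on the right: opprod [d1,...,dk] x = x d1 ... dk.\<close>
definition opprod :: "('a \<Rightarrow> 'a) list \<Rightarrow> 'a \<Rightarrow> 'a" where
  "opprod ds x = fold (\<lambda>d v. d v) ds x"

definition Uk :: "(nat \<Rightarrow> (nat set \<Rightarrow> 'l) \<Rightarrow> (nat set \<Rightarrow> 'l)) \<Rightarrow> nat \<Rightarrow> nat \<Rightarrow> (nat set \<Rightarrow> 'l::comm_monoid_add) \<Rightarrow> (nat set \<Rightarrow> 'l)" where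
  "Uk ops n k = (\<lambda>x \<sigma>. \<Sum>S\<in>{S. S \<subseteq> {..<n} \<and> card S = k}. opprod (map ops (sorted_list_of_set S)) x \<sigma>)"

definition adU :: "('l \<Rightarrow> 'l \<Rightarrow> 'l::comm_monoid_add) \<Rightarrow> (nat \<Rightarrow> nat set \<Rightarrow> 'l) \<Rightarrow> nat \<Rightarrow> nat \<Rightarrow> (nat set \<Rightarrow> 'l) \<Rightarrow> (nat set \<Rightarrow> 'l)" where
  "adU br \<omega> n k = Uk (\<lambda>i. ad br (\<omega> i)) n k"

end

theory Submission
  imports Defs "HOL-Library.Function_Algebras" "HOL-Library.Multiset"
begin

text \<open>The identity is proved in the ring of additive operators on \<open>L\<otimes>E\<close> that preserve every
  subspace of multiples of some \<open>e\<^sub>\<pi>\<close>. There the operators \<open>A\<^sub>i = ad(\<omega>\<^sub>i)\<close> commute, and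
  \<open>A\<^sub>i P A\<^sub>i = 0\<close> for every operator \<open>P\<close>, because \<open>\<omega>\<^sub>i\<close> is a multiple of some \<open>e\<^sub>\<pi>\<close> and
  \<open>e\<^sub>\<pi>\<^sup>2 = 0\<close>. Hence products of the \<open>A\<^sub>i\<close> with a repeated index vanish, which gives
  \<open>U\<^sub>a U\<^sub>b = (a+b choose a) U\<^sub>a\<^sub>+\<^sub>b\<close>; and since \<open>ad\<close> of a bracket is a commutator of operators,
  \<open>ad(y U\<^sub>k) = \<Sum>\<^sub>m (-1)\<^sup>m U\<^sub>m ad(y) U\<^sub>k\<^sub>-\<^sub>m\<close>. With \<open>U\<^sub>3 = U\<^sub>4 = 0\<close> this yields \<open>U\<^sub>2\<^sup>2 = U\<^sub>1U\<^sub>2 = U\<^sub>2U\<^sub>1 = 0\<close>,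
  \<open>U\<^sub>1\<^sup>2 = 2U\<^sub>2\<close>, \<open>U\<^sub>2 ad(y) U\<^sub>2 = 0\<close>, \<open>U\<^sub>1 ad(y) U\<^sub>2 = U\<^sub>2 ad(y) U\<^sub>1\<close> and
  \<open>ad(y U\<^sub>2) = ad(y) U\<^sub>2 - U\<^sub>1 ad(y) U\<^sub>1 + U\<^sub>2 ad(y)\<close>; multiplying out two such expressions
  leaves only \<open>U\<^sub>2 ad(y\<^sub>1) ad(y\<^sub>2) U\<^sub>2\<close>.\<close>

locale lie_ring =
  fixes br :: "'l::ab_group_add \<Rightarrow> 'l \<Rightarrow> 'l"
  assumes bracket_add_left: "br (x + y) z = br x z + br y z"
    and bracket_add_right: "br x (y + z) = br x y + br x z"
    and bracket_self: "br x x = 0"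
    and jacobi: "br x (br y z) + br y (br z x) + br z (br x y) = 0"
begin

lemma bracket_zero_left [simp]: "br 0 z = 0"
  using bracket_add_left[of 0 0 z] by simp

lemma bracket_zero_right [simp]: "br z 0 = 0"
  using bracket_add_right[of z 0 0] by simp

lemma bracket_minus_left: "br (- x) z = - br x z"
  using bracket_add_left[of x "- x" z] by (simp add: eq_neg_iff_add_eq_0 add.commute)

lemma bracket_sum_left: "br (sum f A) z = (\<Sum>i\<in>A. br (f i) z)"
  by (induction A rule: infinite_finite_induct) (simp_all add: bracket_add_left)

lemma bracket_sum_right: "br z (sum f A) = (\<Sum>i\<in>A. br z (f i))"
  by (induction A rule: infinite_finite_induct) (simp_all add: bracket_add_right)

lemma bracket_antisym: "br x y = - br y x"
proof -
  have "br (x + y) (x + y) = (br x x + br x y) + (br y x + br y y)"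
    by (simp add: bracket_add_left bracket_add_right add_ac)
  then show ?thesis by (simp add: bracket_self eq_neg_iff_add_eq_0)
qed

lemma jacobi_derivation: "br a (br b c) = br (br a b) c - br (br a c) b"
proof -
  have "br b (br c a) = br (br a c) b"
    using bracket_antisym[of b "br c a"] bracket_antisym[of c a] bracket_minus_left by simp
  then show ?thesis
    using jacobi[of a b c] bracket_antisym[of c "br a b"]
    by (simp add: algebra_simps eq_neg_iff_add_eq_0)
qed

end

lemma lie_algebra_lie_ring: "lie_algebra scale br \<Longrightarrow> lie_ring br"
  unfolding lie_algebra_def lie_ring_def by blast

definition proper_parts :: "nat set \<Rightarrow> nat set set" where
  "proper_parts \<sigma> = {\<alpha>. \<alpha> \<subseteq> \<sigma> \<and> \<alpha> \<noteq> {} \<and> \<alpha> \<noteq> \<sigma>}"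

lemma finite_proper_parts [simp]: "finite \<sigma> \<Longrightarrow> finite (proper_parts \<sigma>)"
  unfolding proper_parts_def by (rule finite_subset[of _ "Pow \<sigma>"]) auto

lemma tbr_apply: "finite \<sigma> \<Longrightarrow> tbr br y z \<sigma> = (\<Sum>\<alpha>\<in>proper_parts \<sigma>. br (y \<alpha>) (z (\<sigma> - \<alpha>)))"
  unfolding tbr_def proper_parts_def by (simp add: sum.inter_filter[symmetric] conj_assoc)

lemma tbr_apply_infinite: "\<not> finite \<sigma> \<Longrightarrow> tbr br y z \<sigma> = 0"
  unfolding tbr_def by simp

definition tripartitions :: "nat set \<Rightarrow> (nat set \<times> nat set \<times> nat set) set" where
  "tripartitions \<sigma> = {(\<alpha>, \<beta>, \<gamma>). \<alpha> \<noteq> {} \<and> \<beta> \<noteq> {} \<and> \<gamma> \<noteq> {} \<and>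
     \<alpha> \<inter> \<beta> = {} \<and> \<alpha> \<inter> \<gamma> = {} \<and> \<beta> \<inter> \<gamma> = {} \<and> \<alpha> \<union> \<beta> \<union> \<gamma> = \<sigma>}"

context lie_ring
begin

lemma tbr_add_left: "tbr br (y + y') z = tbr br y z + tbr br y' z"
proof
  show "tbr br (y + y') z \<sigma> = (tbr br y z + tbr br y' z) \<sigma>" for \<sigma>
    by (cases "finite \<sigma>") (simp_all add: tbr_apply tbr_apply_infinite bracket_add_left sum.distrib)
qed

lemma tbr_add_right: "tbr br z (y + y') = tbr br z y + tbr br z y'"
proof
  show "tbr br z (y + y') \<sigma> = (tbr br z y + tbr br z y') \<sigma>" for \<sigma>
    by (cases "finite \<sigma>") (simp_all add: tbr_apply tbr_apply_infinite bracket_add_right sum.distrib)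
qed

lemma tbr_zero_right [simp]: "tbr br z 0 = 0"
  using tbr_add_right[of z 0 0] by simp

lemma tbr_tbr_right_apply:
  assumes "finite \<sigma>"
  shows "tbr br x (tbr br u w) \<sigma> = (\<Sum>(\<alpha>, \<beta>, \<gamma>)\<in>tripartitions \<sigma>. br (x \<alpha>) (br (u \<beta>) (w \<gamma>)))"
proof -
  have "tbr br x (tbr br u w) \<sigma> =
      (\<Sum>(\<alpha>, \<beta>)\<in>Sigma (proper_parts \<sigma>) (\<lambda>\<alpha>. proper_parts (\<sigma> - \<alpha>)). br (x \<alpha>) (br (u \<beta>) (w (\<sigma> - \<alpha> - \<beta>))))"
    using assms by (simp add: tbr_apply bracket_sum_right sum.Sigma)
  also have "\<dots> = (\<Sum>(\<alpha>, \<beta>, \<gamma>)\<in>tripartitions \<sigma>. br (x \<alpha>) (br (u \<beta>) (w \<gamma>)))"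
    by (rule sum.reindex_bij_witness[where i="\<lambda>(\<alpha>, \<beta>, \<gamma>). (\<alpha>, \<beta>)" and j="\<lambda>(\<alpha>, \<beta>). (\<alpha>, \<beta>, \<sigma> - \<alpha> - \<beta>)"])
      (auto simp: tripartitions_def proper_parts_def)
  finally show ?thesis .
qed

lemma tbr_tbr_left_apply:
  assumes "finite \<sigma>"
  shows "tbr br (tbr br x u) w \<sigma> = (\<Sum>(\<alpha>, \<beta>, \<gamma>)\<in>tripartitions \<sigma>. br (br (x \<alpha>) (u \<beta>)) (w \<gamma>))"
proof -
  have "tbr br (tbr br x u) w \<sigma> =
      (\<Sum>\<delta>\<in>proper_parts \<sigma>. \<Sum>\<alpha>\<in>proper_parts \<delta>. br (br (x \<alpha>) (u (\<delta> - \<alpha>))) (w (\<sigma> - \<delta>)))"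
    using assms
    by (auto simp: tbr_apply bracket_sum_left proper_parts_def intro!: sum.cong dest: finite_subset)
  also have "\<dots> =
      (\<Sum>(\<delta>, \<alpha>)\<in>Sigma (proper_parts \<sigma>) proper_parts. br (br (x \<alpha>) (u (\<delta> - \<alpha>))) (w (\<sigma> - \<delta>)))"
    using assms by (subst sum.Sigma) (auto simp: proper_parts_def dest: finite_subset)
  also have "\<dots> = (\<Sum>(\<alpha>, \<beta>, \<gamma>)\<in>tripartitions \<sigma>. br (br (x \<alpha>) (u \<beta>)) (w \<gamma>))"
    by (rule sum.reindex_bij_witness[where i="\<lambda>(\<alpha>, \<beta>, \<gamma>). (\<alpha> \<union> \<beta>, \<alpha>)" and j="\<lambda>(\<delta>, \<alpha>). (\<alpha>, \<delta> - \<alpha>, \<sigma> - \<delta>)"])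
      (auto simp: tripartitions_def proper_parts_def, blast+)
  finally show ?thesis .
qed

lemma tbr_jacobi: "tbr br x (tbr br u w) = tbr br (tbr br x u) w - tbr br (tbr br x w) u"
proof (rule ext)
  fix \<sigma>
  show "tbr br x (tbr br u w) \<sigma> = (tbr br (tbr br x u) w - tbr br (tbr br x w) u) \<sigma>"
  proof (cases "finite \<sigma>")
    case True
    have swap: "(\<Sum>(\<alpha>, \<beta>, \<gamma>)\<in>tripartitions \<sigma>. br (br (x \<alpha>) (w \<beta>)) (u \<gamma>)) =
        (\<Sum>(\<alpha>, \<beta>, \<gamma>)\<in>tripartitions \<sigma>. br (br (x \<alpha>) (w \<gamma>)) (u \<beta>))"
      by (rule sum.reindex_bij_witness[where i="\<lambda>(\<alpha>, \<beta>, \<gamma>). (\<alpha>, \<gamma>, \<beta>)" and j="\<lambda>(\<alpha>, \<beta>, \<gamma>). (\<alpha>, \<gamma>, \<beta>)"])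
        (auto simp: tripartitions_def Int_commute Un_ac)
    show ?thesis
      using True swap
      by (simp add: tbr_tbr_right_apply tbr_tbr_left_apply sum_subtractf[symmetric] split_def
          jacobi_derivation)
  qed (simp add: tbr_apply_infinite)
qed

end

definition divisible_by :: "nat set \<Rightarrow> (nat set \<Rightarrow> 'l::zero) \<Rightarrow> bool" where
  "divisible_by \<pi> v \<longleftrightarrow> (\<forall>\<sigma>. v \<sigma> \<noteq> 0 \<longrightarrow> \<pi> \<subseteq> \<sigma>)"

lemma in_sub_divisible_by: "in_sub \<pi> w \<Longrightarrow> divisible_by \<pi> w"
  unfolding in_sub_def divisible_by_def mul_e_def by (auto split: if_splits)

lemma divisible_by_add:
  "divisible_by \<pi> x \<Longrightarrow> divisible_by \<pi> y \<Longrightarrow> divisible_by \<pi> (x + (y :: nat set \<Rightarrow> 'l::monoid_add))"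
  unfolding divisible_by_def by (metis add.right_neutral plus_fun_apply)

lemma divisible_by_minus: "divisible_by \<pi> x \<Longrightarrow> divisible_by \<pi> (- (x :: nat set \<Rightarrow> 'l::group_add))"
  unfolding divisible_by_def by auto

lemma divisible_by_diff:
  "divisible_by \<pi> x \<Longrightarrow> divisible_by \<pi> y \<Longrightarrow> divisible_by \<pi> (x - (y :: nat set \<Rightarrow> 'l::group_add))"
  using divisible_by_add[of \<pi> x "- y"] divisible_by_minus[of \<pi> y] by simp

lemma tilde_zero [simp]: "tilde (0 :: nat set \<Rightarrow> 'l::zero)"
  unfolding tilde_def by simp

lemma tilde_add: "tilde x \<Longrightarrow> tilde y \<Longrightarrow> tilde (x + (y :: nat set \<Rightarrow> 'l::monoid_add))"
proof -
  assume xy: "tilde x" "tilde y"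
  have nz: "x \<sigma> \<noteq> 0 \<or> y \<sigma> \<noteq> 0" if "(x + y) \<sigma> \<noteq> 0" for \<sigma>
    using that by auto
  then have "{\<sigma>. (x + y) \<sigma> \<noteq> 0} \<subseteq> {\<sigma>. x \<sigma> \<noteq> 0} \<union> {\<sigma>. y \<sigma> \<noteq> 0}" by blast
  moreover have "finite ({\<sigma>. x \<sigma> \<noteq> 0} \<union> {\<sigma>. y \<sigma> \<noteq> 0})"
    using xy unfolding tilde_def by simp
  ultimately have "finite {\<sigma>. (x + y) \<sigma> \<noteq> 0}" by (rule finite_subset)
  then show ?thesis using xy nz unfolding tilde_def by blast
qed

lemma tilde_minus: "tilde x \<Longrightarrow> tilde (- (x :: nat set \<Rightarrow> 'l::group_add))"
  unfolding tilde_def by auto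

lemma tilde_diff: "tilde x \<Longrightarrow> tilde y \<Longrightarrow> tilde (x - (y :: nat set \<Rightarrow> 'l::group_add))"
  using tilde_add[of x "- y"] tilde_minus[of y] by simp

lemma tilde_sum: "(\<And>i. i \<in> A \<Longrightarrow> tilde (f i)) \<Longrightarrow> tilde (sum f A :: nat set \<Rightarrow> 'l::comm_monoid_add)"
  by (induction A rule: infinite_finite_induct) (auto intro: tilde_add)

context lie_ring
begin

lemma tbr_nonzero_split:
  assumes "tbr br x y \<sigma> \<noteq> 0"
  obtains \<alpha> where "finite \<sigma>" "\<alpha> \<noteq> {}" "\<alpha> \<subseteq> \<sigma>" "\<sigma> - \<alpha> \<noteq> {}" "x \<alpha> \<noteq> 0" "y (\<sigma> - \<alpha>) \<noteq> 0"
proof -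
  have fin: "finite \<sigma>" using assms tbr_apply_infinite by blast
  then have "(\<Sum>\<alpha>\<in>proper_parts \<sigma>. br (x \<alpha>) (y (\<sigma> - \<alpha>))) \<noteq> 0" using assms by (simp add: tbr_apply)
  then obtain \<alpha> where \<alpha>: "\<alpha> \<in> proper_parts \<sigma>" and "br (x \<alpha>) (y (\<sigma> - \<alpha>)) \<noteq> 0"
    by (rule sum.not_neutral_contains_not_neutral)
  then have "x \<alpha> \<noteq> 0" "y (\<sigma> - \<alpha>) \<noteq> 0" by auto
  with fin \<alpha> show ?thesis by (intro that[of \<alpha>]) (auto simp: proper_parts_def)
qed

lemma tilde_tbr: assumes "tilde x" "tilde y" shows "tilde (tbr br x y)"
proof -
  let ?supp = "\<lambda>v :: nat set \<Rightarrow> 'l. {\<sigma>. v \<sigma> \<noteq> 0}"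
  have "?supp (tbr br x y) \<subseteq> (\<lambda>(a, b). a \<union> b) ` (?supp x \<times> ?supp y)"
  proof
    fix \<sigma> assume "\<sigma> \<in> ?supp (tbr br x y)"
    then obtain \<alpha> where "\<alpha> \<subseteq> \<sigma>" "x \<alpha> \<noteq> 0" "y (\<sigma> - \<alpha>) \<noteq> 0"
      using tbr_nonzero_split[of x y \<sigma>] by auto
    then show "\<sigma> \<in> (\<lambda>(a, b). a \<union> b) ` (?supp x \<times> ?supp y)"
      by (intro image_eqI[of _ _ "(\<alpha>, \<sigma> - \<alpha>)"]) auto
  qed
  moreover have "finite ((\<lambda>(a, b). a \<union> b) ` (?supp x \<times> ?supp y))"
    using assms unfolding tilde_def by simp
  moreover have "finite \<sigma> \<and> \<sigma> \<noteq> {}" if "tbr br x y \<sigma> \<noteq> 0" for \<sigma>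
    using that by (elim tbr_nonzero_split) auto
  ultimately show ?thesis unfolding tilde_def by (blast intro: finite_subset)
qed

lemma divisible_by_tbr_left: "divisible_by \<pi> v \<Longrightarrow> divisible_by \<pi> (tbr br v x)"
  unfolding divisible_by_def by (metis tbr_nonzero_split subset_trans)

lemma divisible_by_tbr_right: "divisible_by \<pi> v \<Longrightarrow> divisible_by \<pi> (tbr br x v)"
  unfolding divisible_by_def by (metis tbr_nonzero_split Diff_subset subset_trans)

lemma tbr_divisible_by_eq_0:
  assumes "\<pi> \<noteq> {}" "divisible_by \<pi> v" "divisible_by \<pi> w"
  shows "tbr br v w = 0"
proof (rule ext, rule ccontr)
  fix \<sigma> assume "tbr br v w \<sigma> \<noteq> (0 :: nat set \<Rightarrow> 'l) \<sigma>"
  then obtain \<alpha> where "\<alpha> \<subseteq> \<sigma>" "v \<alpha> \<noteq> 0" "w (\<sigma> - \<alpha>) \<noteq> 0"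
    using tbr_nonzero_split[of v w \<sigma>] by auto
  then have "\<pi> \<subseteq> \<alpha>" "\<pi> \<subseteq> \<sigma> - \<alpha>" using assms unfolding divisible_by_def by auto
  then show False using assms(1) by blast
qed

end

lemma sum_fun_apply: "sum f A x = (\<Sum>i\<in>A. f i x)"
  by (induction A rule: infinite_finite_induct) simp_all

text \<open>Vanishing outside \<open>L\<otimes>E\<close> makes an operator determined by its values on \<open>L\<otimes>E\<close>.
  Preservation of divisibility by every \<open>e\<^sub>\<pi>\<close> is what makes \<open>ad(\<omega>) p ad(\<omega>)\<close> vanish for all
  operators \<open>p\<close>. Multiplication below is composition in diagrammatic order, matching the right
  action of the paper.\<close>
definition tilde_endo :: "((nat set \<Rightarrow> 'l) \<Rightarrow> (nat set \<Rightarrow> 'l::ab_group_add)) \<Rightarrow> bool" where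
  "tilde_endo f \<longleftrightarrow> (\<forall>a. tilde a \<longrightarrow> tilde (f a)) \<and> (\<forall>a. \<not> tilde a \<longrightarrow> f a = 0) \<and>
     (\<forall>a b. tilde a \<longrightarrow> tilde b \<longrightarrow> f (a + b) = f a + f b) \<and>
     (\<forall>\<pi> a. tilde a \<longrightarrow> divisible_by \<pi> a \<longrightarrow> divisible_by \<pi> (f a))"

typedef (overloaded) ('l::ab_group_add) endo = "{f :: (nat set \<Rightarrow> 'l) \<Rightarrow> (nat set \<Rightarrow> 'l). tilde_endo f}"
  morphisms app Abs_endo
  by (rule exI[of _ "\<lambda>_. 0"]) (simp add: tilde_endo_def divisible_by_def)

lemma tilde_endo_app: "tilde_endo (app p)"
  using app by blast

lemma tilde_app: "tilde v \<Longrightarrow> tilde (app p v)"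
  using tilde_endo_app[of p] unfolding tilde_endo_def by blast

lemma app_not_tilde: "\<not> tilde v \<Longrightarrow> app p v = 0"
  using tilde_endo_app[of p] unfolding tilde_endo_def by blast

lemma app_add: "tilde a \<Longrightarrow> tilde b \<Longrightarrow> app p (a + b) = app p a + app p b"
  using tilde_endo_app[of p] unfolding tilde_endo_def by blast

lemma divisible_by_app: "tilde a \<Longrightarrow> divisible_by \<pi> a \<Longrightarrow> divisible_by \<pi> (app p a)"
  using tilde_endo_app[of p] unfolding tilde_endo_def by blast

lemma app_zero [simp]: "app p 0 = 0"
  using app_add[of 0 0 p] by simp

lemma endo_eqI: "(\<And>v. tilde v \<Longrightarrow> app p v = app q v) \<Longrightarrow> p = q"
  by (metis app_inject app_not_tilde ext)

lemma app_Abs_endo: "tilde_endo f \<Longrightarrow> app (Abs_endo f) = f"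
  by (simp add: Abs_endo_inverse)

instantiation endo :: (ab_group_add) "{ring, monoid_mult}"
begin

definition "0 = Abs_endo (\<lambda>_. 0)"
definition "p + q = Abs_endo (\<lambda>v. app p v + app q v)"
definition "- p = Abs_endo (\<lambda>v. - app p v)"
definition "p - q = Abs_endo (\<lambda>v. app p v - app q v)"
definition "p * q = Abs_endo (\<lambda>v. app q (app p v))"
definition "1 = Abs_endo (\<lambda>v. if tilde v then v else 0)"

lemma app_zero_endo [simp]: "app 0 v = 0"
  unfolding zero_endo_def by (simp add: app_Abs_endo tilde_endo_def divisible_by_def)

lemma app_plus_endo [simp]: "app (p + q) v = app p v + app q v"
  unfolding plus_endo_def
  by (subst app_Abs_endo)
    (auto simp: tilde_endo_def tilde_app app_add app_not_tilde divisible_by_app tilde_add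
      divisible_by_add add_ac)

lemma app_uminus_endo [simp]: "app (- p) v = - app p v"
  unfolding uminus_endo_def
  by (subst app_Abs_endo)
    (auto simp: tilde_endo_def tilde_app app_add app_not_tilde divisible_by_app tilde_minus
      divisible_by_minus)

lemma app_minus_endo [simp]: "app (p - q) v = app p v - app q v"
  unfolding minus_endo_def
  by (subst app_Abs_endo)
    (auto simp: tilde_endo_def tilde_app app_add app_not_tilde divisible_by_app tilde_diff
      divisible_by_diff)

lemma app_times_endo [simp]: "app (p * q) v = app q (app p v)"
  unfolding times_endo_def
  by (subst app_Abs_endo) (auto simp: tilde_endo_def tilde_app app_add app_not_tilde divisible_by_app)

lemma app_one_endo [simp]: "app 1 v = (if tilde v then v else 0)"
  unfolding one_endo_def by (subst app_Abs_endo) (auto simp: tilde_endo_def tilde_add)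

instance
proof
  fix a b c :: "'a endo"
  show "a + b + c = a + (b + c)" by (rule endo_eqI) (simp add: add.assoc)
  show "a + b = b + a" by (rule endo_eqI) (simp add: add.commute)
  show "0 + a = a" by (rule endo_eqI) simp
  show "- a + a = 0" by (rule endo_eqI) simp
  show "a - b = a + - b" by (rule endo_eqI) simp
  show "a * b * c = a * (b * c)" by (rule endo_eqI) simp
  show "(a + b) * c = a * c + b * c" by (rule endo_eqI) (simp add: app_add tilde_app)
  show "a * (b + c) = a * b + a * c" by (rule endo_eqI) simp
  show "1 * a = a" by (rule endo_eqI) simp
  show "a * 1 = a" by (rule endo_eqI) (simp add: tilde_app)
qed

end

lemma app_sum_endo: "app (sum f A) v = (\<Sum>i\<in>A. app (f i) v)"
  by (induction A rule: infinite_finite_induct) simp_all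

definition ad_endo :: "('l::ab_group_add \<Rightarrow> 'l \<Rightarrow> 'l) \<Rightarrow> (nat set \<Rightarrow> 'l) \<Rightarrow> 'l endo" where
  "ad_endo br y = Abs_endo (\<lambda>v. if tilde v then tbr br v y else 0)"

context lie_ring
begin

lemma app_ad_endo: "tilde y \<Longrightarrow> tilde v \<Longrightarrow> app (ad_endo br y) v = tbr br v y"
  unfolding ad_endo_def
  by (subst app_Abs_endo)
    (auto simp: tilde_endo_def tilde_tbr tilde_add tbr_add_left divisible_by_tbr_left)

lemma ad_endo_zero: "ad_endo br 0 = 0"
  by (rule endo_eqI) (simp add: app_ad_endo)

lemma ad_endo_sum: "(\<And>i. i \<in> A \<Longrightarrow> tilde (f i)) \<Longrightarrow> ad_endo br (sum f A) = (\<Sum>i\<in>A. ad_endo br (f i))"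
proof (induction A rule: infinite_finite_induct)
  case (insert x F)
  have "ad_endo br (f x + sum f F) = ad_endo br (f x) + ad_endo br (sum f F)"
    using insert.prems by (intro endo_eqI) (simp add: app_ad_endo tilde_add tilde_sum tbr_add_right)
  also have "\<dots> = ad_endo br (f x) + (\<Sum>i\<in>F. ad_endo br (f i))"
    using insert by simp
  finally show ?case by (simp only: sum.insert[OF insert.hyps])
qed (simp_all add: ad_endo_zero)

lemma ad_endo_tbr:
  "tilde u \<Longrightarrow> tilde w \<Longrightarrow>
    ad_endo br (tbr br u w) = ad_endo br u * ad_endo br w - ad_endo br w * ad_endo br u"
  by (rule endo_eqI) (simp add: app_ad_endo tilde_tbr tbr_jacobi)

end

definition ksubsets :: "'a set \<Rightarrow> nat \<Rightarrow> 'a set set" where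
  "ksubsets I k = {S. S \<subseteq> I \<and> card S = k}"

lemma finite_ksubsets [simp]: "finite I \<Longrightarrow> finite (ksubsets I k)"
  unfolding ksubsets_def by (rule finite_subset[of _ "Pow I"]) auto

lemma card_ksubsets: "finite I \<Longrightarrow> card (ksubsets I k) = card I choose k"
  unfolding ksubsets_def by (rule n_subsets)

lemma sum_ksubsets_disjoint:
  assumes "finite I"
  shows "(\<Sum>S\<in>ksubsets I a. \<Sum>R\<in>ksubsets I b. if S \<inter> R = {} then g S R else 0) =
    (\<Sum>T\<in>ksubsets I (a + b). \<Sum>S\<in>ksubsets T a. g S (T - S))"
proof -
  have fin: "finite S" if "S \<in> ksubsets I k" for S k
    using that assms unfolding ksubsets_def by (auto dest: finite_subset)
  have Un_mem: "S \<union> R \<in> ksubsets I (a + b)"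
    if "S \<in> ksubsets I a" "R \<in> ksubsets I b" "S \<inter> R = {}" for S R
    using card_Un_disjoint[OF fin[OF that(1)] fin[OF that(2)] that(3)] that
    unfolding ksubsets_def by auto
  have Diff_mem: "T - S \<in> ksubsets I b" if "T \<in> ksubsets I (a + b)" "S \<in> ksubsets T a" for T S
  proof -
    have "finite S" "S \<subseteq> T"
      using fin[OF that(1)] that(2) unfolding ksubsets_def by (auto intro: finite_subset)
    then show ?thesis using card_Diff_subset[of S T] that unfolding ksubsets_def by auto
  qed
  have sub_mem: "S \<in> ksubsets I a" if "T \<in> ksubsets I (a + b)" "S \<in> ksubsets T a" for T S
    using that unfolding ksubsets_def by auto
  have mem_Un: "S \<in> ksubsets (S \<union> R) a" if "S \<in> ksubsets I a" for S R
    using that unfolding ksubsets_def by auto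
  have mem_subset: "S \<subseteq> T" if "S \<in> ksubsets T a" for S T
    using that unfolding ksubsets_def by auto
  let ?D = "{p \<in> ksubsets I a \<times> ksubsets I b. fst p \<inter> snd p = {}}"
  have "(\<Sum>S\<in>ksubsets I a. \<Sum>R\<in>ksubsets I b. if S \<inter> R = {} then g S R else 0) =
      (\<Sum>(S, R)\<in>?D. g S R)"
    using assms by (simp add: sum.cartesian_product sum.inter_filter case_prod_unfold)
  also have "\<dots> = (\<Sum>(T, S)\<in>Sigma (ksubsets I (a + b)) (\<lambda>T. ksubsets T a). g S (T - S))"
    by (rule sum.reindex_bij_witness[where i="\<lambda>(T, S). (S, T - S)" and j="\<lambda>(S, R). (S \<union> R, S)"])
      (auto simp: Un_mem Diff_mem sub_mem mem_Un Un_Diff Diff_triv Int_commute Un_absorb1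
        dest: mem_subset)
  also have "\<dots> = (\<Sum>T\<in>ksubsets I (a + b). \<Sum>S\<in>ksubsets T a. g S (T - S))"
    using assms by (subst sum.Sigma) (auto dest: fin)
  finally show ?thesis .
qed

lemma sum_Pow_by_card:
  assumes "finite T"
  shows "(\<Sum>S\<in>Pow T. h S) = (\<Sum>m\<le>card T. \<Sum>S\<in>ksubsets T m. h S)"
proof -
  have "(\<Sum>S\<in>Pow T. h S) = (\<Sum>m\<le>card T. \<Sum>S\<in>{S\<in>Pow T. card S = m}. h S)"
    using assms by (intro sum.group[symmetric]) (auto intro: card_mono)
  then show ?thesis unfolding ksubsets_def by simp
qed

lemma sum_Pow_insert:
  assumes "finite T" "k \<notin> T"
  shows "(\<Sum>S\<in>Pow (insert k T). h S) = (\<Sum>S\<in>Pow T. h S) + (\<Sum>S\<in>Pow T. h (insert k S))"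
proof -
  have "inj_on (insert k) (Pow T)"
    using assms(2) by (intro inj_onI) (metis PowD insert_ident subsetD)
  with assms show ?thesis
    unfolding Pow_insert by (subst sum.union_disjoint) (auto simp: sum.reindex)
qed

lemma sum_constant_lessThan_card: "(\<Sum>_\<in>A. x) = (\<Sum>_<card A. x)"
  by (induction A rule: infinite_finite_induct) (simp_all add: add.commute)

definition sign_pow :: "nat \<Rightarrow> 'a::ab_group_add \<Rightarrow> 'a" where
  "sign_pow m x = (if even m then x else - x)"

lemma sign_pow_sum: "sign_pow m (sum f A) = (\<Sum>i\<in>A. sign_pow m (f i))"
  unfolding sign_pow_def by (simp add: sum_negf)

lemma sign_pow_mult_left: "sign_pow m (x :: 'a::ring) * y = sign_pow m (x * y)"
  unfolding sign_pow_def by simp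

lemma sign_pow_mult_right: "y * sign_pow m (x :: 'a::ring) = sign_pow m (y * x)"
  unfolding sign_pow_def by simp

lemma sign_pow_Suc: "sign_pow (Suc m) x = - sign_pow m x"
  unfolding sign_pow_def by simp

lemma ring_sandwich_identity:
  fixes U1 U2 Y1 Y2 :: "'a::ring"
  assumes "U2 * U2 = 0" "U1 * U2 = 0" "U2 * U1 = 0" "U1 * U1 = U2 + U2"
    and "U2 * Y1 * U2 = 0" "U2 * Y2 * U2 = 0"
    and "U1 * Y1 * U2 = U2 * Y1 * U1" "U1 * Y2 * U2 = U2 * Y2 * U1"
  shows "(Y1 * U2 - U1 * Y1 * U1 + U2 * Y1) * (Y2 * U2 - U1 * Y2 * U1 + U2 * Y2) = U2 * Y1 * Y2 * U2"
proof -
  have "U2 * (U2 * z) = 0" "U1 * (U2 * z) = 0" "U2 * (U1 * z) = 0" "U1 * (U1 * z) = U2 * z + U2 * z"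
    "U2 * (Y1 * (U2 * z)) = 0" "U2 * (Y2 * (U2 * z)) = 0"
    "U1 * (Y1 * (U2 * z)) = U2 * (Y1 * (U1 * z))" "U1 * (Y2 * (U2 * z)) = U2 * (Y2 * (U1 * z))" for z
    using assms by (simp_all add: mult.assoc[symmetric] distrib_right)
  with assms show ?thesis by (simp add: algebra_simps)
qed

locale commuting_family = lie_ring br for br :: "'l::ab_group_add \<Rightarrow> 'l \<Rightarrow> 'l" +
  fixes \<omega> :: "nat \<Rightarrow> nat set \<Rightarrow> 'l" and n :: nat
  assumes tilde_family: "i < n \<Longrightarrow> tilde (\<omega> i)"
    and family_commute: "i < n \<Longrightarrow> j < n \<Longrightarrow> tbr br (\<omega> i) (\<omega> j) = (\<lambda>_. 0)"
    and family_divisible: "i < n \<Longrightarrow> \<exists>\<pi>. \<pi> \<noteq> {} \<and> divisible_by \<pi> (\<omega> i)"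
begin

definition ad_fam :: "nat \<Rightarrow> 'l endo" where
  "ad_fam i = ad_endo br (\<omega> i)"

definition ad_prod :: "nat set \<Rightarrow> 'l endo" where
  "ad_prod S = fold (\<lambda>i p. p * ad_fam i) (sorted_list_of_set S) 1"

definition U :: "nat \<Rightarrow> 'l endo" where
  "U k = (\<Sum>S\<in>ksubsets {..<n} k. ad_prod S)"

lemma app_ad_fam: "i < n \<Longrightarrow> tilde v \<Longrightarrow> app (ad_fam i) v = tbr br v (\<omega> i)"
  unfolding ad_fam_def by (simp add: app_ad_endo tilde_family)

lemma ad_fam_commute:
  assumes "i < n" "j < n"
  shows "ad_fam i * ad_fam j = ad_fam j * ad_fam i"
proof (rule endo_eqI)
  fix v :: "nat set \<Rightarrow> 'l" assume v: "tilde v"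
  have "tbr br (\<omega> i) (\<omega> j) = 0" using family_commute[OF assms] by (simp add: fun_eq_iff)
  then have "tbr br v (tbr br (\<omega> i) (\<omega> j)) = 0" by simp
  then have "tbr br (tbr br v (\<omega> i)) (\<omega> j) = tbr br (tbr br v (\<omega> j)) (\<omega> i)"
    by (simp add: tbr_jacobi)
  with assms v show "app (ad_fam i * ad_fam j) v = app (ad_fam j * ad_fam i) v"
    by (simp add: app_ad_fam tilde_tbr tilde_family)
qed

text \<open>Both outer factors multiply by \<open>e\<^sub>\<pi>\<close>, and the operator in between cannot remove it.\<close>
lemma ad_fam_sandwich_eq_0:
  assumes "i < n"
  shows "ad_fam i * p * ad_fam i = 0"
proof (rule endo_eqI)
  fix v :: "nat set \<Rightarrow> 'l" assume v: "tilde v"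
  obtain \<pi> where \<pi>: "\<pi> \<noteq> {}" "divisible_by \<pi> (\<omega> i)" using family_divisible[OF assms] by blast
  have t: "tilde (tbr br v (\<omega> i))" using v tilde_family[OF assms] by (rule tilde_tbr)
  have "divisible_by \<pi> (app p (tbr br v (\<omega> i)))"
    using \<pi>(2) by (intro divisible_by_app t divisible_by_tbr_right)
  then have "tbr br (app p (tbr br v (\<omega> i))) (\<omega> i) = 0"
    using \<pi> by (intro tbr_divisible_by_eq_0)
  with assms v t show "app (ad_fam i * p * ad_fam i) v = app 0 v"
    by (simp add: app_ad_fam tilde_app)
qed

lemma fold_times_ad_fam: "fold (\<lambda>i p. p * ad_fam i) xs c = c * fold (\<lambda>i p. p * ad_fam i) xs 1"
proof (induction xs arbitrary: c)
  case (Cons x xs)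
  show ?case using Cons[of "c * ad_fam x"] Cons[of "ad_fam x"] by (simp add: mult.assoc)
qed simp

lemma ad_prod_empty [simp]: "ad_prod {} = 1"
  unfolding ad_prod_def by simp

lemma ad_prod_insert:
  assumes "finite S" "S \<subseteq> {..<n}" "k < n" "k \<notin> S"
  shows "ad_prod (insert k S) = ad_prod S * ad_fam k" "ad_prod (insert k S) = ad_fam k * ad_prod S"
proof -
  let ?f = "\<lambda>i p. p * ad_fam i"
  have set_eq: "set (sorted_list_of_set (insert k S)) = insert k S"
    using assms(1) by (simp only: set_sorted_list_of_set finite_insert)
  have commute: "?f x \<circ> ?f y = ?f y \<circ> ?f x"
    if "x \<in> set (sorted_list_of_set (insert k S))" "y \<in> set (sorted_list_of_set (insert k S))" for x y
  proof -
    have "x < n" "y < n" using that assms unfolding set_eq by auto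
    then show ?thesis by (auto simp: fun_eq_iff mult.assoc ad_fam_commute)
  qed
  have mset_eq: "mset (sorted_list_of_set X) = mset_set X" if "finite X" for X :: "nat set"
    by (metis mset_sorted_list_of_multiset sorted_list_of_mset_set)
  have "fold ?f (sorted_list_of_set (insert k S)) = fold ?f (sorted_list_of_set S @ [k])"
    by (rule fold_multiset_equiv[OF commute]) (simp_all add: mset_eq assms)
  then show "ad_prod (insert k S) = ad_prod S * ad_fam k"
    unfolding ad_prod_def by simp
  have "fold ?f (sorted_list_of_set (insert k S)) = fold ?f (k # sorted_list_of_set S)"
    by (rule fold_multiset_equiv[OF commute]) (simp_all add: mset_eq assms)
  then show "ad_prod (insert k S) = ad_fam k * ad_prod S"
    unfolding ad_prod_def using fold_times_ad_fam[of _ "ad_fam k"] by simp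
qed

lemma ad_prod_Un:
  assumes "finite R" "finite S" "S \<subseteq> {..<n}" "R \<subseteq> {..<n}" "S \<inter> R = {}"
  shows "ad_prod S * ad_prod R = ad_prod (S \<union> R)"
  using assms
proof (induction R rule: finite_induct)
  case (insert k R)
  then have "ad_prod S * ad_prod (insert k R) = ad_prod (S \<union> R) * ad_fam k"
    by (simp add: ad_prod_insert(1) mult.assoc[symmetric])
  also have "\<dots> = ad_prod (S \<union> insert k R)"
    using insert by (subst Un_insert_right, subst ad_prod_insert(1)) auto
  finally show ?case .
qed simp

lemma ad_prod_overlap:
  assumes "finite R" "finite S" "S \<subseteq> {..<n}" "R \<subseteq> {..<n}" "S \<inter> R \<noteq> {}"
  shows "ad_prod S * p * ad_prod R = 0"
proof -
  obtain k where k: "k \<in> S" "k \<in> R" using assms by blast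
  then have "k < n" using assms by auto
  have "ad_prod S = ad_prod (insert k (S - {k}))" using k by (simp add: insert_absorb)
  also have "\<dots> = ad_prod (S - {k}) * ad_fam k"
    using assms \<open>k < n\<close> by (intro ad_prod_insert(1)) auto
  finally have S: "ad_prod S = ad_prod (S - {k}) * ad_fam k" .
  have "ad_prod R = ad_prod (insert k (R - {k}))" using k by (simp add: insert_absorb)
  also have "\<dots> = ad_fam k * ad_prod (R - {k})"
    using assms \<open>k < n\<close> by (intro ad_prod_insert(2)) auto
  finally have "ad_prod S * p * ad_prod R =
      ad_prod (S - {k}) * (ad_fam k * p * ad_fam k) * ad_prod (R - {k})"
    using S by (simp add: mult.assoc)
  also have "\<dots> = 0" using ad_fam_sandwich_eq_0[OF \<open>k < n\<close>] by simp
  finally show ?thesis .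
qed

lemma ksubsets_lessThanD: "S \<in> ksubsets {..<n} k \<Longrightarrow> finite S \<and> S \<subseteq> {..<n} \<and> card S = k"
  unfolding ksubsets_def by (auto intro: finite_subset)

lemma fold_ad_eq_app:
  assumes "set xs \<subseteq> {..<n}" "tilde x"
  shows "fold (\<lambda>d v. d v) (map (\<lambda>i. ad br (\<omega> i)) xs) (app c x) = app (fold (\<lambda>i p. p * ad_fam i) xs c) x"
  using assms(1)
proof (induction xs arbitrary: c)
  case (Cons i xs)
  then have "ad br (\<omega> i) (app c x) = app (c * ad_fam i) x"
    using assms(2) by (simp add: ad_def app_ad_fam tilde_app)
  then show ?case using Cons.IH[of "c * ad_fam i"] Cons.prems by simp
qed simp

lemma adU_eq_app_U:
  assumes "tilde x"
  shows "adU br \<omega> n k x = app (U k) x"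
proof -
  have "opprod (map (\<lambda>i. ad br (\<omega> i)) (sorted_list_of_set S)) x = app (ad_prod S) x"
    if "S \<in> ksubsets {..<n} k" for S
    using fold_ad_eq_app[of "sorted_list_of_set S" x 1] ksubsets_lessThanD[OF that] assms
    by (simp add: opprod_def ad_prod_def)
  then show ?thesis
    unfolding adU_def Uk_def ksubsets_def[symmetric] U_def
    by (simp add: app_sum_endo sum_fun_apply fun_eq_iff)
qed

lemma U_sandwich:
  "U a * Y * U b = (\<Sum>T\<in>ksubsets {..<n} (a + b). \<Sum>S\<in>ksubsets T a. ad_prod S * Y * ad_prod (T - S))"
proof -
  have "U a * Y * U b = (\<Sum>S\<in>ksubsets {..<n} a. \<Sum>R\<in>ksubsets {..<n} b. ad_prod S * Y * ad_prod R)"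
    unfolding U_def sum_distrib_left sum_distrib_right by (rule sum.swap)
  also have "\<dots> = (\<Sum>S\<in>ksubsets {..<n} a. \<Sum>R\<in>ksubsets {..<n} b.
      if S \<inter> R = {} then ad_prod S * Y * ad_prod R else 0)"
  proof (intro sum.cong refl)
    fix S R assume "S \<in> ksubsets {..<n} a" "R \<in> ksubsets {..<n} b"
    then show "ad_prod S * Y * ad_prod R = (if S \<inter> R = {} then ad_prod S * Y * ad_prod R else 0)"
      using ad_prod_overlap[of R S Y] by (simp add: ksubsets_lessThanD)
  qed
  also have "\<dots> = (\<Sum>T\<in>ksubsets {..<n} (a + b). \<Sum>S\<in>ksubsets T a. ad_prod S * Y * ad_prod (T - S))"
    by (rule sum_ksubsets_disjoint) simp
  finally show ?thesis .
qed

lemma U_mult_U: "U a * U b = (\<Sum>_<(a + b) choose a. U (a + b))"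
proof -
  have "U a * U b = U a * 1 * U b" by simp
  also have "\<dots> = (\<Sum>T\<in>ksubsets {..<n} (a + b). \<Sum>S\<in>ksubsets T a. ad_prod S * 1 * ad_prod (T - S))"
    by (rule U_sandwich)
  also have "\<dots> = (\<Sum>T\<in>ksubsets {..<n} (a + b). \<Sum>S\<in>ksubsets T a. ad_prod T)"
  proof (intro sum.cong refl)
    fix T S assume T: "T \<in> ksubsets {..<n} (a + b)" and "S \<in> ksubsets T a"
    then have "S \<subseteq> T" unfolding ksubsets_def by blast
    moreover have "finite T" "T \<subseteq> {..<n}" using ksubsets_lessThanD[OF T] by simp_all
    ultimately have "ad_prod S * ad_prod (T - S) = ad_prod (S \<union> (T - S))"
      by (intro ad_prod_Un) (auto dest: finite_subset)
    with \<open>S \<subseteq> T\<close> show "ad_prod S * 1 * ad_prod (T - S) = ad_prod T"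
      by (simp add: Un_absorb1)
  qed
  also have "\<dots> = (\<Sum>T\<in>ksubsets {..<n} (a + b). \<Sum>_<(a + b) choose a. ad_prod T)"
  proof (intro sum.cong refl)
    fix T assume "T \<in> ksubsets {..<n} (a + b)"
    then have "card (ksubsets T a) = (a + b) choose a"
      using ksubsets_lessThanD card_ksubsets by metis
    then show "(\<Sum>_\<in>ksubsets T a. ad_prod T) = (\<Sum>_<(a + b) choose a. ad_prod T)"
      by (subst sum_constant_lessThan_card) simp
  qed
  also have "\<dots> = (\<Sum>_<(a + b) choose a. U (a + b))"
    unfolding U_def by (rule sum.swap)
  finally show ?thesis .
qed

lemma ad_endo_app_ad_prod:
  assumes "tilde y" "finite T" "T \<subseteq> {..<n}"
  shows "ad_endo br (app (ad_prod T) y) =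
    (\<Sum>S\<in>Pow T. sign_pow (card S) (ad_prod S * ad_endo br y * ad_prod (T - S)))"
  using assms(2,3)
proof (induction T rule: finite_induct)
  case empty
  show ?case using assms(1) by (simp add: sign_pow_def)
next
  case (insert k T)
  let ?Y = "ad_endo br y" and ?u = "app (ad_prod T) y"
  define F where "F S = sign_pow (card S) (ad_prod S * ?Y * ad_prod (insert k T - S))" for S
  have k: "k < n" and T: "T \<subseteq> {..<n}" using insert.prems by auto
  have u: "tilde ?u" using assms(1) by (rule tilde_app)
  have "app (ad_prod (insert k T)) y = tbr br ?u (\<omega> k)"
    using u k by (simp add: ad_prod_insert(1)[OF insert.hyps(1) T k insert.hyps(2)] app_ad_fam)
  then have "ad_endo br (app (ad_prod (insert k T)) y) =
      ad_endo br ?u * ad_fam k - ad_fam k * ad_endo br ?u"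
    using ad_endo_tbr[OF u tilde_family[OF k]] by (simp add: ad_fam_def)
  also have "\<dots> = (\<Sum>S\<in>Pow T. sign_pow (card S) (ad_prod S * ?Y * ad_prod (T - S)) * ad_fam k)
      - (\<Sum>S\<in>Pow T. ad_fam k * sign_pow (card S) (ad_prod S * ?Y * ad_prod (T - S)))"
    using insert.IH[OF T] by (simp add: sum_distrib_left sum_distrib_right)
  also have "\<dots> = (\<Sum>S\<in>Pow T. F S) + (\<Sum>S\<in>Pow T. F (insert k S))"
  proof -
    have "sign_pow (card S) (ad_prod S * ?Y * ad_prod (T - S)) * ad_fam k = F S" if "S \<subseteq> T" for S
    proof -
      have "ad_prod (T - S) * ad_fam k = ad_prod (insert k T - S)"
        using that insert.hyps T k by (subst ad_prod_insert(1)[symmetric]) (auto simp: insert_Diff_if)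
      then show ?thesis unfolding F_def by (simp add: sign_pow_mult_left mult.assoc)
    qed
    moreover have "ad_fam k * sign_pow (card S) (ad_prod S * ?Y * ad_prod (T - S)) = - F (insert k S)"
      if "S \<subseteq> T" for S
    proof -
      have S: "finite S" "S \<subseteq> {..<n}" "k \<notin> S"
        using that insert.hyps T by (auto intro: finite_subset)
      have "ad_fam k * ad_prod S = ad_prod (insert k S)"
        using ad_prod_insert(2)[OF S(1,2) k S(3)] by simp
      moreover have "insert k T - insert k S = T - S" using that insert.hyps by auto
      ultimately show ?thesis
        unfolding F_def using S by (simp add: sign_pow_mult_right sign_pow_Suc mult.assoc[symmetric])
    qed
    ultimately show ?thesis by (simp add: sum_negf)
  qed
  also have "\<dots> = (\<Sum>S\<in>Pow (insert k T). F S)"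
    using insert.hyps by (rule sum_Pow_insert[symmetric])
  finally show ?case unfolding F_def .
qed

lemma ad_endo_app_U:
  assumes "tilde y"
  shows "ad_endo br (app (U k) y) = (\<Sum>m\<le>k. sign_pow m (U m * ad_endo br y * U (k - m)))"
proof -
  let ?Y = "ad_endo br y" and ?K = "ksubsets {..<n} k"
  have "ad_endo br (app (U k) y) = (\<Sum>T\<in>?K. ad_endo br (app (ad_prod T) y))"
    unfolding U_def app_sum_endo using assms by (intro ad_endo_sum tilde_app)
  also have "\<dots> = (\<Sum>T\<in>?K. \<Sum>m\<le>k. \<Sum>S\<in>ksubsets T m. sign_pow m (ad_prod S * ?Y * ad_prod (T - S)))"
  proof (intro sum.cong refl)
    fix T assume "T \<in> ?K"
    then have T: "finite T" "T \<subseteq> {..<n}" "card T = k" by (simp_all add: ksubsets_lessThanD)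
    have "ad_endo br (app (ad_prod T) y) =
        (\<Sum>m\<le>card T. \<Sum>S\<in>ksubsets T m. sign_pow (card S) (ad_prod S * ?Y * ad_prod (T - S)))"
      using ad_endo_app_ad_prod[OF assms T(1,2)] sum_Pow_by_card[OF T(1)] by simp
    then show "ad_endo br (app (ad_prod T) y) =
        (\<Sum>m\<le>k. \<Sum>S\<in>ksubsets T m. sign_pow m (ad_prod S * ?Y * ad_prod (T - S)))"
      unfolding T(3) by (simp add: ksubsets_def)
  qed
  also have "\<dots> = (\<Sum>m\<le>k. sign_pow m (\<Sum>T\<in>?K. \<Sum>S\<in>ksubsets T m. ad_prod S * ?Y * ad_prod (T - S)))"
    by (subst sum.swap) (simp add: sign_pow_sum)
  also have "\<dots> = (\<Sum>m\<le>k. sign_pow m (U m * ?Y * U (k - m)))"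
    by (intro sum.cong refl) (simp add: U_sandwich)
  finally show ?thesis .
qed

lemma U_0: "U 0 = 1"
proof -
  have "ksubsets {..<n} 0 = {{}}"
    unfolding ksubsets_def by (auto simp: card_eq_0_iff dest: finite_subset[OF _ finite_lessThan])
  then show ?thesis unfolding U_def by simp
qed

lemma ad_endo_U2_mult:
  assumes "U 3 = 0" "U 4 = 0" "tilde y1" "tilde y2"
  shows "ad_endo br (app (U 2) y1) * ad_endo br (app (U 2) y2) =
    U 2 * ad_endo br y1 * ad_endo br y2 * U 2"
proof -
  have "U 2 * U 2 = 0" "U 1 * U 2 = 0" "U 2 * U 1 = 0" "U 1 * U 1 = U 2 + U 2"
    using U_mult_U[of 2 2] U_mult_U[of 1 2] U_mult_U[of 2 1] U_mult_U[of 1 1] assms(1,2)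
    by (simp_all add: numeral_eq_Suc)
  moreover have "U 2 * ad_endo br y * U 2 = 0" if "tilde y" for y
    using ad_endo_app_U[OF that, of 4] assms(1,2) U_0
    by (simp add: atMost_nat_numeral sign_pow_def ad_endo_zero)
  moreover have "U 1 * ad_endo br y * U 2 = U 2 * ad_endo br y * U 1" if "tilde y" for y
    using ad_endo_app_U[OF that, of 3] assms(1) U_0
    by (simp add: atMost_nat_numeral sign_pow_def ad_endo_zero)
  moreover have "ad_endo br (app (U 2) y) =
      ad_endo br y * U 2 - U 1 * ad_endo br y * U 1 + U 2 * ad_endo br y" if "tilde y" for y
    using ad_endo_app_U[OF that, of 2] U_0 by (simp add: atMost_nat_numeral sign_pow_def)
  ultimately show ?thesis
    using assms(3,4) by (simp add: ring_sandwich_identity)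
qed

lemma U_eq_0I: "(\<forall>x. tilde x \<longrightarrow> adU br \<omega> n k x = (\<lambda>_. 0)) \<Longrightarrow> U k = 0"
  by (auto intro!: endo_eqI simp: adU_eq_app_U zero_fun_def)

lemma adU2_ad_ad_adU2:
  assumes "U 3 = 0" "U 4 = 0" "tilde y1" "tilde y2" "tilde x"
  shows "ad br (adU br \<omega> n 2 y2) (ad br (adU br \<omega> n 2 y1) x) =
    adU br \<omega> n 2 (ad br y2 (ad br y1 (adU br \<omega> n 2 x)))"
proof -
  have "ad br (adU br \<omega> n 2 y2) (ad br (adU br \<omega> n 2 y1) x) =
      app (ad_endo br (app (U 2) y1) * ad_endo br (app (U 2) y2)) x"
    using assms(3-5) by (simp add: adU_eq_app_U ad_def app_ad_endo tilde_tbr tilde_app)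
  also have "\<dots> = app (U 2 * ad_endo br y1 * ad_endo br y2 * U 2) x"
    by (simp only: ad_endo_U2_mult[OF assms(1-4)])
  also have "\<dots> = adU br \<omega> n 2 (ad br y2 (ad br y1 (adU br \<omega> n 2 x)))"
    using assms(3-5) by (simp add: adU_eq_app_U ad_def app_ad_endo tilde_tbr tilde_app)
  finally show ?thesis .
qed

end

theorem lemma14:
  fixes scale :: "'f::field \<Rightarrow> 'l::ab_group_add \<Rightarrow> 'l"
    and br :: "'l \<Rightarrow> 'l \<Rightarrow> 'l"
    and \<omega> :: "nat \<Rightarrow> nat set \<Rightarrow> 'l"
    and n :: nat
    and y1 y2 :: "nat set \<Rightarrow> 'l"
  assumes lie: "lie_algebra scale br"
    and fam: "\<forall>i<n. tilde (\<omega> i)"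
    and comm: "\<forall>i<n. \<forall>j<n. tbr br (\<omega> i) (\<omega> j) = (\<lambda>_. 0)"
    and sub: "\<forall>i<n. \<exists>\<pi>. finite \<pi> \<and> \<pi> \<noteq> {} \<and> in_sub \<pi> (\<omega> i)"
    and U3: "\<forall>x. tilde x \<longrightarrow> adU br \<omega> n 3 x = (\<lambda>_. 0)"
    and U4: "\<forall>x. tilde x \<longrightarrow> adU br \<omega> n 4 x = (\<lambda>_. 0)"
    and y1: "tilde y1" and y2: "tilde y2"
  shows "\<forall>x. tilde x \<longrightarrow>
           ad br (adU br \<omega> n 2 y2) (ad br (adU br \<omega> n 2 y1) x)
           = adU br \<omega> n 2 (ad br y2 (ad br y1 (adU br \<omega> n 2 x)))"
proof -
  interpret commuting_family br \<omega> n
  proof (rule commuting_family.intro)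
    show "lie_ring br" using lie by (rule lie_algebra_lie_ring)
    show "commuting_family_axioms br \<omega> n"
    proof
      show "tilde (\<omega> i)" if "i < n" for i using fam that by blast
      show "tbr br (\<omega> i) (\<omega> j) = (\<lambda>_. 0)" if "i < n" "j < n" for i j using comm that by blast
      show "\<exists>\<pi>. \<pi> \<noteq> {} \<and> divisible_by \<pi> (\<omega> i)" if "i < n" for i
        using sub that by (blast dest: in_sub_divisible_by)
    qed
  qed
  show ?thesis
    using adU2_ad_ad_adU2 U_eq_0I[OF U3] U_eq_0I[OF U4] y1 y2 by blast
qed

end
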